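(* Let $\alpha\in(0,1)$ and let $Z_1,Z_2,\dots$ be i.i.d. with $P(Z=k)=(-1)^{k-1}\binom{\alpha}{k}$, $k=1,2,\dots$. Let $\sigma_\alpha(0)=0$, $\sigma_\alpha(n)=\sum_{j=1}^nZ_j$, and $L_\alpha(t)=\max\{n\in\mathbb{N}_0:\sigma_\alpha(n)\le t\}$, $t\in\mathbb{N}_0$. Then for all $t,t_1,t_2\in\mathbb{N}_0$, $$\mathbb{E}[L_\alpha(t)]=\binom{t+\alpha}{t}-1,\qquad \mathbb{E}[L_\alpha(t)^2]=2\binom{t+2\alpha}{t}-3\binom{t+\alpha}{t}+1,$$ $$\mathbb{E}[L_\alpha(t_1)L_\alpha(t_2)]=\sum_{\ell=1}^{\min(t_1,t_2)}\binom{\ell+\alpha-1}{\ell}\left[\binom{t_1-\ell+\alpha}{t_1-\ell}+\binom{t_2-\ell+\alpha}{t_2-\ell}-1\right].$$ Moreover, for fixed $t_1\in\mathbb{N}$, as $t_2\to\infty$, $$\mathrm{Corr}[L_\alpha(t_1),L_\alpha(t_2)]=\frac{\mathrm{Cov}[L_\alpha(t_1),L_\alpha(t_2)]}{\sqrt{\mathbb{V}[L_\alpha(t_1)]\,\mathbb{V}[L_\alpha(t_2)]}}\sim C\,t_2^{-\alpha}$$ for a constant $C=C(t_1,\alpha)$.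
   Context: $\mathbb{N}_0=\mathbb{N}\cup\{0\}$. For real $x$ and $k\in\mathbb{N}_0$, $\binom{x}{k}=x(x-1)\cdots(x-k+1)/k!$. $\mathbb{V}$ denotes variance and $f\sim g$ means $f/g\to1$. *)

theory Defs
  imports "HOL-Probability.Probability"
begin

definition covariance :: "'a measure \<Rightarrow> ('a \<Rightarrow> real) \<Rightarrow> ('a \<Rightarrow> real) \<Rightarrow> real" where
  "covariance M X Y = integral\<^sup>L M (\<lambda>x. (X x - integral\<^sup>L M X) * (Y x - integral\<^sup>L M Y))"

definition sigma_sum :: "(nat \<Rightarrow> 'a \<Rightarrow> nat) \<Rightarrow> nat \<Rightarrow> 'a \<Rightarrow> nat" where
  "sigma_sum Z n \<omega> = (\<Sum>j=1..n. Z j \<omega>)"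

definition L_count :: "(nat \<Rightarrow> 'a \<Rightarrow> nat) \<Rightarrow> nat \<Rightarrow> 'a \<Rightarrow> nat" where
  "L_count Z t \<omega> = Max {n. sigma_sum Z n \<omega> \<le> t}"

end

theory Submission
  imports Defs
begin

(*
  The Sibuya law has generating function 1 - (1 - x)^alpha, so the renewal sequence
  u_l = P(l is a partial sum of the Z_j) has generating function (1 - x)^(-alpha),
  i.e. u_l = shifted_gchoose (alpha - 1) l, and the exact formulas are convolution
  identities between such coefficients (Vandermonde's identity). Since Z_j >= 1 almost
  surely, L(t) is a function of Z_1, ..., Z_T truncated at T + 1 for every T >= t, so
  the moments of L are finite sums over lists. There, conditioning on the first step
  reduces them to the renewal equation  sum_k P(Z = k) u_(t-k) = u_t  for t >= 1.

  As t2 grows, Cov[L(t1), L(t2)] converges to shifted_gchoose (2 alpha) t1 -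
  shifted_gchoose alpha t1 > 0, whereas shifted_gchoose b t ~ t^b / Gamma (b + 1) gives
  Var[L(t)] ~ (2 / Gamma (2 alpha + 1) - 1 / Gamma (alpha + 1)^2) t^(2 alpha) with a
  positive constant; hence the correlation decays like t2^(-alpha).
*)

section \<open>Generalized binomial coefficients and the Sibuya law\<close>

(* the coefficient of x^t in (1 - x)^(-b-1) *)
definition shifted_gchoose :: "real \<Rightarrow> nat \<Rightarrow> real" where
  "shifted_gchoose b t = (real t + b) gchoose t"

(* the coefficient of x^k in 1 - (1 - x)^a, for k >= 1 *)
definition sibuya :: "real \<Rightarrow> nat \<Rightarrow> real" where
  "sibuya a k = (-1) ^ (k - 1) * (a gchoose k)"

lemma shifted_gchoose_0_right [simp]: "shifted_gchoose b 0 = 1"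
  by (simp add: shifted_gchoose_def)

lemma shifted_gchoose_0_left [simp]: "shifted_gchoose 0 t = 1"
  using binomial_gbinomial[of t t, where 'a = real] by (simp add: shifted_gchoose_def)

lemma shifted_gchoose_minus_one: "t \<ge> 1 \<Longrightarrow> shifted_gchoose (-1) t = 0"
  using binomial_gbinomial[of "t - 1" t, where 'a = real]
  by (simp add: shifted_gchoose_def of_nat_diff binomial_eq_0)

lemma shifted_gchoose_conv_gbinomial: "shifted_gchoose b t = (-1) ^ t * ((- b - 1) gchoose t)"
proof -
  have "- b - 1 = - (b + 1)" by simp
  then show ?thesis using gbinomial_minus'[of b t] by (simp only: shifted_gchoose_def add.commute)
qed

lemma shifted_gchoose_Suc:
  "shifted_gchoose b (Suc t) = shifted_gchoose b t + shifted_gchoose (b - 1) (Suc t)"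
  using gbinomial_Suc_Suc[of "real t + b" t] by (simp add: shifted_gchoose_def algebra_simps)

lemma shifted_gchoose_pos: "b > -1 \<Longrightarrow> shifted_gchoose b t > 0"
proof -
  assume "b > -1"
  then have "pochhammer (b + 1) t > 0" by (intro pochhammer_pos) simp
  then show ?thesis by (simp add: shifted_gchoose_def gbinomial_pochhammer' algebra_simps)
qed

lemma shifted_gchoose_sum: "(\<Sum>l\<le>t. shifted_gchoose (b - 1) l) = shifted_gchoose b t"
  by (induction t) (simp_all add: shifted_gchoose_Suc[of b])

lemma shifted_gchoose_sum_from_1: "(\<Sum>l=1..t. shifted_gchoose (a - 1) l) = shifted_gchoose a t - 1"
  using shifted_gchoose_sum[of a t] by (simp add: atMost_atLeast0 sum.atLeast_Suc_atMost)

lemma shifted_gchoose_convolution: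
  "(\<Sum>k\<le>t. shifted_gchoose a k * shifted_gchoose b (t - k)) = shifted_gchoose (a + b + 1) t"
proof -
  have sign: "(-1::real) ^ k * (-1) ^ (t - k) = (-1) ^ t" if "k \<le> t" for k
    using that by (simp flip: power_add)
  have "(\<Sum>k\<le>t. shifted_gchoose a k * shifted_gchoose b (t - k))
      = (\<Sum>k\<le>t. (-1) ^ t * (((- a - 1) gchoose k) * ((- b - 1) gchoose (t - k))))"
  proof (intro sum.cong refl)
    fix k assume "k \<in> {..t}"
    then have "(-1) ^ k * (-1) ^ (t - k) = (-1::real) ^ t" by (simp add: sign)
    then show "shifted_gchoose a k * shifted_gchoose b (t - k)
        = (-1) ^ t * (((- a - 1) gchoose k) * ((- b - 1) gchoose (t - k)))"
      by (simp add: shifted_gchoose_conv_gbinomial mult_ac)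
  qed
  also have "\<dots> = shifted_gchoose (a + b + 1) t"
    using gbinomial_Vandermonde[of "- a - 1" "- b - 1" t]
    by (simp add: shifted_gchoose_conv_gbinomial atMost_atLeast0 algebra_simps flip: sum_distrib_left)
  finally show ?thesis .
qed

lemma shifted_gchoose_convolution_from_1:
  "(\<Sum>l=1..t. shifted_gchoose (a - 1) l * shifted_gchoose a (t - l))
     = shifted_gchoose (2 * a) t - shifted_gchoose a t"
  using shifted_gchoose_convolution[of "a - 1" a t]
  by (simp add: atMost_atLeast0 sum.atLeast_Suc_atMost)

lemma sibuya_conv_shifted_gchoose: "k \<ge> 1 \<Longrightarrow> sibuya a k = - shifted_gchoose (- a - 1) k"
  by (cases k) (simp_all add: sibuya_def shifted_gchoose_conv_gbinomial)

lemma sibuya_Suc: "sibuya a (Suc k) = a / Suc k * shifted_gchoose (- a) k"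
proof -
  have "a gchoose Suc k = a / Suc k * ((a - 1) gchoose k)"
    using gbinomial_absorption[of k a] by (simp add: field_simps)
  then show ?thesis by (simp add: sibuya_def shifted_gchoose_conv_gbinomial)
qed

lemma sibuya_pos: "0 < a \<Longrightarrow> a < 1 \<Longrightarrow> k \<ge> 1 \<Longrightarrow> sibuya a k > 0"
  by (cases k) (simp_all add: sibuya_Suc shifted_gchoose_pos)

lemma sibuya_convolution:
  "(\<Sum>k=1..t. sibuya a k * shifted_gchoose b (t - k)) = shifted_gchoose b t - shifted_gchoose (b - a) t"
proof -
  have "(\<Sum>k\<le>t. shifted_gchoose (- a - 1) k * shifted_gchoose b (t - k))
      = shifted_gchoose b t + (\<Sum>k=1..t. shifted_gchoose (- a - 1) k * shifted_gchoose b (t - k))"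
    by (simp add: atMost_atLeast0 sum.atLeast_Suc_atMost)
  moreover have "(\<Sum>k=1..t. sibuya a k * shifted_gchoose b (t - k))
      = - (\<Sum>k=1..t. shifted_gchoose (- a - 1) k * shifted_gchoose b (t - k))"
    by (simp add: sibuya_conv_shifted_gchoose flip: sum_negf)
  ultimately show ?thesis
    using shifted_gchoose_convolution[of "- a - 1" b t] by simp
qed

lemma sibuya_sum: "(\<Sum>k=1..t. sibuya a k) = 1 - shifted_gchoose (- a) t"
  using sibuya_convolution[of a 0 t] by simp

lemma sibuya_renewal_equation:
  "t \<ge> 1 \<Longrightarrow> (\<Sum>k=1..t. sibuya a k * shifted_gchoose (a - 1) (t - k)) = shifted_gchoose (a - 1) t"
  using sibuya_convolution[of a "a - 1" t] by (simp add: shifted_gchoose_minus_one)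

lemma renewal_convolution:
  fixes p u g :: "nat \<Rightarrow> real"
  assumes renewal: "\<And>j. j \<ge> 1 \<Longrightarrow> (\<Sum>k=1..j. p k * u (j - k)) = u j"
  shows "(\<Sum>k=1..t. p k * (\<Sum>l\<le>t - k. u l * g (t - k - l))) = (\<Sum>l=1..t. u l * g (t - l))"
proof -
  define p' where "p' k = (if k = 0 then 0 else p k)" for k
  have "(\<Sum>k=1..t. p k * (\<Sum>l\<le>t - k. u l * g (t - k - l)))
      = (\<Sum>k=1..t. \<Sum>l\<le>t - k. p' k * u l * g (t - k - l))"
    by (auto simp: p'_def sum_distrib_left mult.assoc intro!: sum.cong)
  also have "\<dots> = (\<Sum>k\<le>t. \<Sum>l\<le>t - k. p' k * u l * g (t - k - l))"
    by (simp add: p'_def atMost_atLeast0 sum.atLeast_Suc_atMost)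
  also have "\<dots> = (\<Sum>j\<le>t. \<Sum>k\<le>j. p' k * u (j - k) * g (t - j))"
  proof -
    have "{(k, l). k + l \<le> t} = Sigma {..t} (\<lambda>k. {..t - k})" by auto
    then show ?thesis
      using sum.triangle_reindex_eq[of "\<lambda>k l. p' k * u l * g (t - k - l)" t]
      by (simp add: sum.Sigma)
  qed
  also have "\<dots> = (\<Sum>j\<le>t. (if j = 0 then 0 else u j) * g (t - j))"
  proof (intro sum.cong refl)
    fix j
    have "(\<Sum>k\<le>j. p' k * u (j - k)) = (if j = 0 then 0 else u j)"
      using renewal[of j] by (simp add: p'_def atMost_atLeast0 sum.atLeast_Suc_atMost)
    then show "(\<Sum>k\<le>j. p' k * u (j - k) * g (t - j)) = (if j = 0 then 0 else u j) * g (t - j)"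
      by (simp flip: sum_distrib_right)
  qed
  also have "\<dots> = (\<Sum>l=1..t. u l * g (t - l))"
    by (simp add: atMost_atLeast0 sum.atLeast_Suc_atMost)
  finally show ?thesis .
qed

section \<open>Asymptotics of shifted binomial coefficients\<close>

lemma shifted_gchoose_asymptotic:
  "(\<lambda>n. shifted_gchoose b n * real n powr (- b)) \<longlonglongrightarrow> rGamma (b + 1)"
proof -
  have "\<forall>\<^sub>F n in sequentially. ((b + real n) gchoose n) * exp (- b * ln (real n))
          = shifted_gchoose b n * real n powr (- b)"
    using eventually_gt_at_top[of 0]
    by eventually_elim (simp add: shifted_gchoose_def powr_def add.commute)
  with Gamma_gbinomial[of b] show ?thesis by (simp add: tendsto_cong)
qed

lemma shifted_gchoose_tendsto_0: "b < 0 \<Longrightarrow> shifted_gchoose b \<longlonglongrightarrow> 0"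
proof -
  assume "b < 0"
  then have "(\<lambda>n. shifted_gchoose b n * real n powr (- b) * real n powr b) \<longlonglongrightarrow> rGamma (b + 1) * 0"
    by (intro tendsto_mult shifted_gchoose_asymptotic tendsto_neg_powr filterlim_real_sequentially)
  moreover have "\<forall>\<^sub>F n in sequentially. shifted_gchoose b n * real n powr (- b) * real n powr b = shifted_gchoose b n"
    using eventually_gt_at_top[of 0] by eventually_elim (simp add: mult.assoc flip: powr_add)
  ultimately show ?thesis by (simp add: tendsto_cong)
qed

lemma shifted_gchoose_shift_diff_tendsto_0:
  assumes "a < 1"
  shows "(\<lambda>t. shifted_gchoose a (t - l) - shifted_gchoose a t) \<longlonglongrightarrow> 0"
proof (induction l)
  case (Suc l)
  have "(\<lambda>t. shifted_gchoose (a - 1) (t - l)) \<longlonglongrightarrow> 0"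
    using assms by (intro filterlim_compose[OF shifted_gchoose_tendsto_0 filterlim_minus_const_nat_at_top]) simp
  with Suc.IH have "(\<lambda>t. (shifted_gchoose a (t - l) - shifted_gchoose a t) - shifted_gchoose (a - 1) (t - l))
      \<longlonglongrightarrow> 0 - 0"
    by (intro tendsto_diff)
  moreover have "\<forall>\<^sub>F t in sequentially. (shifted_gchoose a (t - l) - shifted_gchoose a t) - shifted_gchoose (a - 1) (t - l)
      = shifted_gchoose a (t - Suc l) - shifted_gchoose a t"
    using eventually_gt_at_top[of l]
  proof eventually_elim
    case (elim t)
    then have "t - l = Suc (t - Suc l)" by simp
    then show ?case by (simp add: shifted_gchoose_Suc[of a "t - Suc l"])
  qed
  ultimately show ?case by (simp add: tendsto_cong)
qed simp

lemma shifted_gchoose_variance_asymptotic: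
  fixes a :: real
  assumes "0 < a"
  shows "(\<lambda>t. (2 * shifted_gchoose (2 * a) t - (shifted_gchoose a t)\<^sup>2 - shifted_gchoose a t)
             * real t powr (- (2 * a)))
         \<longlonglongrightarrow> 2 * rGamma (2 * a + 1) - (rGamma (a + 1))\<^sup>2"
proof -
  have "(\<lambda>t. 2 * (shifted_gchoose (2 * a) t * real t powr (- (2 * a)))
             - (shifted_gchoose a t * real t powr (- a))\<^sup>2
             - shifted_gchoose a t * real t powr (- a) * real t powr (- a))
        \<longlonglongrightarrow> 2 * rGamma (2 * a + 1) - (rGamma (a + 1))\<^sup>2 - rGamma (a + 1) * 0"
    using \<open>0 < a\<close>
    by (intro tendsto_intros shifted_gchoose_asymptotic tendsto_neg_powr filterlim_real_sequentially) auto
  moreover have "\<forall>\<^sub>F t in sequentially.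
      2 * (shifted_gchoose (2 * a) t * real t powr (- (2 * a)))
        - (shifted_gchoose a t * real t powr (- a))\<^sup>2
        - shifted_gchoose a t * real t powr (- a) * real t powr (- a)
      = (2 * shifted_gchoose (2 * a) t - (shifted_gchoose a t)\<^sup>2 - shifted_gchoose a t)
        * real t powr (- (2 * a))"
    using eventually_gt_at_top[of 0]
  proof eventually_elim
    case (elim t)
    then have "real t powr (- (2 * a)) = real t powr (- a) * real t powr (- a)"
      by (simp flip: powr_add)
    then show ?case by (simp add: algebra_simps power2_eq_square)
  qed
  ultimately show ?thesis by (simp add: tendsto_cong)
qed

(* ln Gamma (2x + 1) - 2 ln Gamma (x + 1) increases, the digamma function being
   increasing, and equals ln 2 at x = 1. *)
lemma Gamma_double_less:
  fixes a :: real
  assumes "0 < a" and "a < 1"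
  shows "Gamma (2 * a + 1) < 2 * (Gamma (a + 1))\<^sup>2"
proof -
  define f where "f x = ln_Gamma (2 * x + 1) - 2 * ln_Gamma (x + 1)" for x :: real
  have "f a < f 1"
  proof (rule DERIV_pos_imp_increasing[OF \<open>a < 1\<close>])
    fix x assume "a \<le> x" "x \<le> 1"
    then have "x > 0" using \<open>0 < a\<close> by simp
    then have "DERIV f x :> 2 * (Digamma (2 * x + 1) - Digamma (x + 1))"
      unfolding f_def by (auto intro!: derivative_eq_intros simp: algebra_simps)
    moreover have "Digamma (x + 1) < Digamma (2 * x + 1)"
      using \<open>x > 0\<close> by (intro Digamma_real_strict_mono) auto
    ultimately show "\<exists>y. DERIV f x :> y \<and> y > 0" by auto
  qed
  moreover have "f 1 = ln 2"
    using Gamma_fact[of 2, where 'a = real] Gamma_fact[of 1, where 'a = real]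
    by (simp add: f_def ln_Gamma_real_pos numeral_3_eq_3)
  ultimately have "ln_Gamma (2 * a + 1) < ln 2 + 2 * ln_Gamma (a + 1)"
    by (simp add: f_def)
  then have "exp (ln_Gamma (2 * a + 1)) < exp (ln 2 + 2 * ln_Gamma (a + 1))"
    by simp
  also have "\<dots> = 2 * (exp (ln_Gamma (a + 1)))\<^sup>2"
    by (simp add: exp_add exp_double)
  finally have "exp (ln_Gamma (2 * a + 1)) < 2 * (exp (ln_Gamma (a + 1)))\<^sup>2" .
  with \<open>0 < a\<close> show ?thesis by (simp add: Gamma_real_pos_exp)
qed

section \<open>Renewal counts of finite sequences\<close>

fun renewals :: "nat \<Rightarrow> nat list \<Rightarrow> nat" where
  "renewals t [] = 0"
| "renewals t (k # ws) = (if k \<le> t then Suc (renewals (t - k) ws) else 0)"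

lemma le_renewals_iff: "n \<le> renewals t ws \<longleftrightarrow> n \<le> length ws \<and> sum_list (take n ws) \<le> t"
proof (induction ws arbitrary: t n)
  case (Cons k ws)
  then show ?case by (cases n) auto
qed simp

lemma renewals_min: "t < N \<Longrightarrow> renewals t (map (\<lambda>k. min k N) ws) = renewals t ws"
  by (induction ws arbitrary: t) auto

lemma Max_partial_sums_eq_renewals:
  fixes z :: "nat \<Rightarrow> nat"
  assumes pos: "\<And>j. j \<ge> 1 \<Longrightarrow> z j \<ge> 1" and "t \<le> T"
  shows "Max {n. (\<Sum>j=1..n. z j) \<le> t} = renewals t (map z [1..<Suc T])"
proof -
  define ws where "ws = map z [1..<Suc T]"
  have len: "length ws = T" by (simp add: ws_def)
  have prefix: "sum_list (take n ws) = (\<Sum>j=1..n. z j)" if "n \<le> T" for n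
  proof -
    have "take n ws = map z [1..<Suc n]"
      using that by (simp add: ws_def take_map take_upt del: upt_Suc)
    then show ?thesis
      by (simp add: interv_sum_list_conv_sum_set_nat atLeastLessThanSuc_atLeastAtMost del: upt_Suc)
  qed
  have "(\<Sum>j=1..n. z j) \<le> t \<longleftrightarrow> n \<le> renewals t ws" for n
  proof
    assume sum_le: "(\<Sum>j=1..n. z j) \<le> t"
    have "n \<le> (\<Sum>j=1..n. z j)"
      using sum_mono[of "{1..n}" "\<lambda>_. 1::nat" z] pos by simp
    then have "n \<le> T" using sum_le \<open>t \<le> T\<close> by linarith
    then show "n \<le> renewals t ws"
      using sum_le by (simp add: le_renewals_iff prefix len)
  next
    assume "n \<le> renewals t ws"
    then have "n \<le> T" "sum_list (take n ws) \<le> t" by (simp_all add: le_renewals_iff len)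
    then show "(\<Sum>j=1..n. z j) \<le> t" by (simp add: prefix)
  qed
  then have "{n. (\<Sum>j=1..n. z j) \<le> t} = {..renewals t ws}" by auto
  moreover have "Max {..renewals t ws} = renewals t ws" by (rule Max_eqI) auto
  ultimately show ?thesis by (simp only: ws_def)
qed

section \<open>Expectations over independent finite sequences\<close>

definition list_expectation :: "'a set \<Rightarrow> ('a \<Rightarrow> real) \<Rightarrow> nat \<Rightarrow> ('a list \<Rightarrow> real) \<Rightarrow> real" where
  "list_expectation A q T f = (\<Sum>ws\<in>{ws. set ws \<subseteq> A \<and> length ws = T}. f ws * prod_list (map q ws))"

lemma list_expectation_0 [simp]: "list_expectation A q 0 f = f []"
proof -
  have "{ws. set ws \<subseteq> A \<and> length ws = 0} = {[]}" by auto
  then show ?thesis by (simp add: list_expectation_def)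
qed

lemma list_expectation_Suc:
  "list_expectation A q (Suc T) f = (\<Sum>k\<in>A. q k * list_expectation A q T (\<lambda>ws. f (k # ws)))"
proof -
  have lists: "{ws. set ws \<subseteq> A \<and> length ws = Suc T}
      = (\<lambda>(k, ws). k # ws) ` (A \<times> {ws. set ws \<subseteq> A \<and> length ws = T})"
    by (auto simp: length_Suc_conv image_iff)
  have inj: "inj_on (\<lambda>(k, ws). k # ws) (A \<times> {ws. set ws \<subseteq> A \<and> length ws = T})"
    by (auto simp: inj_on_def)
  have "list_expectation A q (Suc T) f
      = (\<Sum>(k, ws)\<in>A \<times> {ws. set ws \<subseteq> A \<and> length ws = T}. f (k # ws) * prod_list (map q (k # ws)))"
    unfolding list_expectation_def lists by (subst sum.reindex[OF inj]) (simp add: case_prod_unfold)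
  also have "\<dots> = (\<Sum>k\<in>A. q k * list_expectation A q T (\<lambda>ws. f (k # ws)))"
    by (simp add: list_expectation_def sum_distrib_left mult_ac flip: sum.cartesian_product)
  finally show ?thesis .
qed

lemma list_expectation_zero [simp]: "list_expectation A q T (\<lambda>_. 0) = 0"
  by (simp add: list_expectation_def)

lemma list_expectation_add:
  "list_expectation A q T (\<lambda>ws. f ws + g ws) = list_expectation A q T f + list_expectation A q T g"
  by (simp add: list_expectation_def sum.distrib distrib_right)

lemma list_expectation_diff:
  "list_expectation A q T (\<lambda>ws. f ws - g ws) = list_expectation A q T f - list_expectation A q T g"
  by (simp add: list_expectation_def sum_subtractf left_diff_distrib)

lemma list_expectation_cmult:
  "list_expectation A q T (\<lambda>ws. c * f ws) = c * list_expectation A q T f"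
  by (simp add: list_expectation_def sum_distrib_left mult.assoc)

lemma list_expectation_const:
  "sum q A = 1 \<Longrightarrow> list_expectation A q T (\<lambda>_. c) = c"
  by (induction T) (simp_all add: list_expectation_Suc flip: sum_distrib_right)

lemma list_expectation_nonneg:
  "(\<And>k. k \<in> A \<Longrightarrow> q k \<ge> 0) \<Longrightarrow> (\<And>ws. f ws \<ge> 0) \<Longrightarrow> list_expectation A q T f \<ge> 0"
  unfolding list_expectation_def by (intro sum_nonneg mult_nonneg_nonneg prod_list_nonneg) auto

lemma list_expectation_centered_product:
  assumes "sum q A = 1"
  shows "list_expectation A q T (\<lambda>ws. (f ws - c1) * (g ws - c2))
       = list_expectation A q T (\<lambda>ws. f ws * g ws) - c2 * list_expectation A q T f
         - c1 * list_expectation A q T g + c1 * c2"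
proof -
  have "(\<lambda>ws. (f ws - c1) * (g ws - c2)) = (\<lambda>ws. f ws * g ws - c2 * f ws - c1 * g ws + c1 * c2)"
    by (simp add: fun_eq_iff algebra_simps)
  then show ?thesis
    by (simp only: list_expectation_add list_expectation_diff list_expectation_cmult
        list_expectation_const[OF assms])
qed

lemma list_expectation_renewals_product_Cons:
  assumes "sum q A = 1" and "k \<le> t" and "k \<le> s"
  shows "list_expectation A q T (\<lambda>ws. real (renewals t (k # ws)) * real (renewals s (k # ws)))
       = 1 + list_expectation A q T (\<lambda>ws. real (renewals (t - k) ws))
           + list_expectation A q T (\<lambda>ws. real (renewals (s - k) ws))
           + list_expectation A q T (\<lambda>ws. real (renewals (t - k) ws) * real (renewals (s - k) ws))"
proof -
  have "(\<lambda>ws. real (renewals t (k # ws)) * real (renewals s (k # ws)))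
      = (\<lambda>ws. 1 + real (renewals (t - k) ws) + real (renewals (s - k) ws)
               + real (renewals (t - k) ws) * real (renewals (s - k) ws))"
    using assms by (simp add: fun_eq_iff algebra_simps)
  then show ?thesis by (simp only: list_expectation_add list_expectation_const[OF assms(1)])
qed

section \<open>The truncated Sibuya model\<close>

(* The law of min Z N on {0..N}. The null atom at 0 lets min Z N be used as it is,
   without first discarding the null event Z = 0. *)
definition truncated_sibuya :: "real \<Rightarrow> nat \<Rightarrow> nat \<Rightarrow> real" where
  "truncated_sibuya a N k =
     (if k = 0 then 0 else if k < N then sibuya a k else shifted_gchoose (- a) (N - 1))"

lemma sum_truncated_sibuya: "N \<ge> 1 \<Longrightarrow> sum (truncated_sibuya a N) {0..N} = 1"
proof -
  assume "N \<ge> 1"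
  then obtain n where N: "N = Suc n" by (cases N) auto
  have "sum (truncated_sibuya a N) {0..N}
      = (\<Sum>k=1..n. truncated_sibuya a N k) + truncated_sibuya a N N"
    by (simp add: N sum.atLeast_Suc_atMost truncated_sibuya_def)
  also have "\<dots> = (\<Sum>k=1..n. sibuya a k) + shifted_gchoose (- a) n"
    by (simp add: N truncated_sibuya_def)
  finally show ?thesis using sibuya_sum[of a n] by simp
qed

abbreviation sibuya_expectation :: "real \<Rightarrow> nat \<Rightarrow> nat \<Rightarrow> (nat list \<Rightarrow> real) \<Rightarrow> real" where
  "sibuya_expectation a N \<equiv> list_expectation {0..N} (truncated_sibuya a N)"

lemma sibuya_expectation_first_step:
  assumes "t < N" and vanish: "\<And>k ws. t < k \<Longrightarrow> f (k # ws) = 0"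
  shows "sibuya_expectation a N (Suc T) f
      = (\<Sum>k=1..t. sibuya a k * sibuya_expectation a N T (\<lambda>ws. f (k # ws)))"
proof -
  have "sibuya_expectation a N (Suc T) f
      = (\<Sum>k=1..t. truncated_sibuya a N k * sibuya_expectation a N T (\<lambda>ws. f (k # ws)))"
    unfolding list_expectation_Suc using \<open>t < N\<close>
    by (intro sum.mono_neutral_right) (auto simp: vanish truncated_sibuya_def)
  also have "\<dots> = (\<Sum>k=1..t. sibuya a k * sibuya_expectation a N T (\<lambda>ws. f (k # ws)))"
    using \<open>t < N\<close> by (intro sum.cong refl) (simp add: truncated_sibuya_def)
  finally show ?thesis .
qed

lemma sibuya_expectation_renewals:
  assumes "t < N" and "t \<le> T"
  shows "sibuya_expectation a N T (\<lambda>ws. real (renewals t ws)) = shifted_gchoose a t - 1"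
  using assms
proof (induction t arbitrary: T rule: less_induct)
  case (less t)
  show ?case
  proof (cases T)
    case (Suc T')
    have "sibuya_expectation a N T (\<lambda>ws. real (renewals t ws))
        = (\<Sum>k=1..t. sibuya a k * sibuya_expectation a N T' (\<lambda>ws. 1 + real (renewals (t - k) ws)))"
      unfolding Suc using less.prems
      by (subst sibuya_expectation_first_step) (auto intro!: sum.cong)
    also have "\<dots> = (\<Sum>k=1..t. sibuya a k * shifted_gchoose a (t - k))"
    proof (intro sum.cong refl)
      fix k assume "k \<in> {1..t}"
      then have "sibuya_expectation a N T' (\<lambda>ws. real (renewals (t - k) ws)) = shifted_gchoose a (t - k) - 1"
        using less.prems Suc by (intro less.IH) auto
      moreover have "N \<ge> 1" using less.prems by simp
      ultimately show "sibuya a k * sibuya_expectation a N T' (\<lambda>ws. 1 + real (renewals (t - k) ws))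
          = sibuya a k * shifted_gchoose a (t - k)"
        by (simp add: list_expectation_add list_expectation_const sum_truncated_sibuya)
    qed
    also have "\<dots> = shifted_gchoose a t - 1"
      using sibuya_convolution[of a a t] by simp
    finally show ?thesis .
  qed (use less.prems in simp)
qed

lemma sibuya_expectation_renewals_product_add:
  assumes "t + d < N" and "t + d \<le> T"
  shows "sibuya_expectation a N T (\<lambda>ws. real (renewals t ws) * real (renewals (t + d) ws))
       = (\<Sum>l=1..t. shifted_gchoose (a - 1) l *
            (shifted_gchoose a (t - l) + shifted_gchoose a (t - l + d) - 1))"
  using assms
proof (induction t arbitrary: T rule: less_induct)
  case (less t)
  define g where "g s = shifted_gchoose a s + shifted_gchoose a (s + d) - 1" for s
  have "N \<ge> 1" using less.prems by simp
  show ?case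
  proof (cases T)
    case (Suc T')
    have "sibuya_expectation a N T (\<lambda>ws. real (renewals t ws) * real (renewals (t + d) ws))
        = (\<Sum>k=1..t. sibuya a k *
             sibuya_expectation a N T' (\<lambda>ws. real (renewals t (k # ws)) * real (renewals (t + d) (k # ws))))"
      unfolding Suc using less.prems by (intro sibuya_expectation_first_step) auto
    also have "\<dots> = (\<Sum>k=1..t. sibuya a k * (\<Sum>l\<le>t - k. shifted_gchoose (a - 1) l * g (t - k - l)))"
    proof (intro sum.cong refl)
      fix k assume k: "k \<in> {1..t}"
      have shift: "t + d - k = t - k + d" using k by simp
      have "sibuya_expectation a N T' (\<lambda>ws. real (renewals t (k # ws)) * real (renewals (t + d) (k # ws)))
          = 1 + sibuya_expectation a N T' (\<lambda>ws. real (renewals (t - k) ws))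
              + sibuya_expectation a N T' (\<lambda>ws. real (renewals (t - k + d) ws))
              + sibuya_expectation a N T' (\<lambda>ws. real (renewals (t - k) ws) * real (renewals (t - k + d) ws))"
        using k sum_truncated_sibuya[OF \<open>N \<ge> 1\<close>] unfolding shift[symmetric]
        by (intro list_expectation_renewals_product_Cons) auto
      also have "\<dots> = g (t - k) + (\<Sum>l=1..t - k. shifted_gchoose (a - 1) l * g (t - k - l))"
      proof -
        have "sibuya_expectation a N T' (\<lambda>ws. real (renewals (t - k) ws) * real (renewals (t - k + d) ws))
            = (\<Sum>l=1..t - k. shifted_gchoose (a - 1) l *
                 (shifted_gchoose a (t - k - l) + shifted_gchoose a (t - k - l + d) - 1))"
          using k less.prems Suc by (intro less.IH) auto
        moreover have "sibuya_expectation a N T' (\<lambda>ws. real (renewals s ws)) = shifted_gchoose a s - 1"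
          if "s \<le> t - k + d" for s
          using that k less.prems Suc by (intro sibuya_expectation_renewals) auto
        ultimately show ?thesis by (simp add: g_def)
      qed
      also have "\<dots> = (\<Sum>l\<le>t - k. shifted_gchoose (a - 1) l * g (t - k - l))"
        by (simp add: atMost_atLeast0 sum.atLeast_Suc_atMost)
      finally show "sibuya a k * sibuya_expectation a N T' (\<lambda>ws. real (renewals t (k # ws)) * real (renewals (t + d) (k # ws)))
          = sibuya a k * (\<Sum>l\<le>t - k. shifted_gchoose (a - 1) l * g (t - k - l))" by simp
    qed
    also have "\<dots> = (\<Sum>l=1..t. shifted_gchoose (a - 1) l * g (t - l))"
      by (rule renewal_convolution) (rule sibuya_renewal_equation)
    finally show ?thesis by (simp add: g_def)
  qed (use less.prems in simp)
qed

lemma sibuya_expectation_renewals_product: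
  assumes "t1 \<le> t2" and "t2 < N" and "t2 \<le> T"
  shows "sibuya_expectation a N T (\<lambda>ws. real (renewals t1 ws) * real (renewals t2 ws))
       = (\<Sum>l=1..t1. shifted_gchoose (a - 1) l *
            (shifted_gchoose a (t1 - l) + shifted_gchoose a (t2 - l) - 1))"
proof -
  obtain d where t2: "t2 = t1 + d" using \<open>t1 \<le> t2\<close> by (metis le_iff_add)
  then show ?thesis
    using sibuya_expectation_renewals_product_add[of t1 d N T a] assms
    by (auto intro!: sum.cong)
qed

(* With probability P(Z >= N) the first step overshoots t, and then renewals vanish. *)
lemma sibuya_expectation_centered_square_ge:
  assumes "0 < a" and "a < 1" and "t < N"
  shows "sibuya_expectation a N (Suc T) (\<lambda>ws. (real (renewals t ws) - c)\<^sup>2)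
       \<ge> shifted_gchoose (- a) (N - 1) * c\<^sup>2"
proof -
  have N: "N \<ge> 1" using \<open>t < N\<close> by simp
  have nonneg: "truncated_sibuya a N k \<ge> 0" for k
    using assms sibuya_pos[of a k] shifted_gchoose_pos[of "- a" "N - 1"]
    by (auto simp: truncated_sibuya_def intro: less_imp_le)
  have "shifted_gchoose (- a) (N - 1) * c\<^sup>2
      = truncated_sibuya a N N * sibuya_expectation a N T (\<lambda>ws. (real (renewals t (N # ws)) - c)\<^sup>2)"
    using \<open>t < N\<close> list_expectation_const[OF sum_truncated_sibuya[OF N]]
    by (simp add: truncated_sibuya_def)
  also have "\<dots> \<le> (\<Sum>k\<in>{0..N}. truncated_sibuya a N k *
                   sibuya_expectation a N T (\<lambda>ws. (real (renewals t (k # ws)) - c)\<^sup>2))"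
    by (intro member_le_sum mult_nonneg_nonneg nonneg list_expectation_nonneg) auto
  also have "\<dots> = sibuya_expectation a N (Suc T) (\<lambda>ws. (real (renewals t ws) - c)\<^sup>2)"
    by (simp add: list_expectation_Suc)
  finally show ?thesis .
qed

section \<open>Functions of finitely many independent random variables\<close>

lemma (in prob_space) expectation_finite_range:
  fixes X :: "'a \<Rightarrow> 'b" and f :: "'b \<Rightarrow> real"
  assumes "finite S" and range: "\<And>\<omega>. \<omega> \<in> space M \<Longrightarrow> X \<omega> \<in> S"
    and events: "\<And>s. s \<in> S \<Longrightarrow> {\<omega> \<in> space M. X \<omega> = s} \<in> events"
  shows "(\<lambda>\<omega>. f (X \<omega>)) \<in> borel_measurable M"
    and "expectation (\<lambda>\<omega>. f (X \<omega>)) = (\<Sum>s\<in>S. f s * prob {\<omega> \<in> space M. X \<omega> = s})"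
proof -
  have simple: "f (X \<omega>) = (\<Sum>s\<in>S. f s * indicator {\<omega> \<in> space M. X \<omega> = s} \<omega>)"
    if "\<omega> \<in> space M" for \<omega>
    using \<open>finite S\<close> range[OF that] that by (simp add: indicator_def if_distrib sum.delta cong: if_cong)
  have "(\<lambda>\<omega>. \<Sum>s\<in>S. f s * indicator {\<omega> \<in> space M. X \<omega> = s} \<omega>) \<in> borel_measurable M"
    using events by (intro borel_measurable_sum borel_measurable_times borel_measurable_indicator) auto
  then show "(\<lambda>\<omega>. f (X \<omega>)) \<in> borel_measurable M"
    by (rule measurable_cong[THEN iffD2, rotated]) (simp add: simple)
  have "expectation (\<lambda>\<omega>. f (X \<omega>))
      = expectation (\<lambda>\<omega>. \<Sum>s\<in>S. f s * indicator {\<omega> \<in> space M. X \<omega> = s} \<omega>)"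
    by (intro Bochner_Integration.integral_cong refl) (simp add: simple)
  also have "\<dots> = (\<Sum>s\<in>S. f s * prob {\<omega> \<in> space M. X \<omega> = s})"
    using events by (subst Bochner_Integration.integral_sum) (auto simp: emeasure_eq_measure)
  finally show "expectation (\<lambda>\<omega>. f (X \<omega>)) = (\<Sum>s\<in>S. f s * prob {\<omega> \<in> space M. X \<omega> = s})" .
qed

lemma (in prob_space) prob_indep_prefix:
  fixes X :: "nat \<Rightarrow> 'a \<Rightarrow> 'b"
  assumes indep: "indep_vars (\<lambda>_. count_space UNIV) X {1..T}"
    and law: "\<And>i x. i \<in> {1..T} \<Longrightarrow> x \<in> set ws \<Longrightarrow> prob {\<omega> \<in> space M. X i \<omega> = x} = q x"
    and "length ws = T"
  shows "{\<omega> \<in> space M. map (\<lambda>i. X i \<omega>) [1..<Suc T] = ws} \<in> events"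
    and "prob {\<omega> \<in> space M. map (\<lambda>i. X i \<omega>) [1..<Suc T] = ws} = prod_list (map q ws)"
proof -
  define E where "E j = {\<omega> \<in> space M. X j \<omega> = ws ! (j - 1)}" for j
  have prefix_eq: "{\<omega> \<in> space M. map (\<lambda>i. X i \<omega>) [1..<Suc T] = ws}
      = {\<omega> \<in> space M. \<forall>i\<in>{..<T}. \<omega> \<in> E (Suc i)}"
    using \<open>length ws = T\<close> by (auto simp: E_def list_eq_iff_nth_eq nth_upt simp del: upt_Suc)
  have indep_E: "indep_events E {1..T}"
    unfolding E_def by (rule indep_eventsI_indep_vars[OF indep]) auto
  then have "E (Suc i) \<in> events" if "i < T" for i
    using that by (auto simp: indep_events_def)
  then show "{\<omega> \<in> space M. map (\<lambda>i. X i \<omega>) [1..<Suc T] = ws} \<in> events"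
    unfolding prefix_eq by (intro sets.sets_Collect_finite_All) (auto simp: E_def)
  have "prob {\<omega> \<in> space M. map (\<lambda>i. X i \<omega>) [1..<Suc T] = ws} = (\<Prod>j\<in>{1..T}. prob (E j))"
  proof (cases "T = 0")
    case True
    then show ?thesis unfolding prefix_eq by (simp add: prob_space)
  next
    case False
    have "{1..T} = Suc ` {..<T}" by (simp add: image_Suc_lessThan)
    then have "(\<Inter>j\<in>{1..T}. E j) = (\<Inter>i\<in>{..<T}. E (Suc i))"
      by (simp only: image_image)
    also have "\<dots> = {\<omega> \<in> space M. \<forall>i\<in>{..<T}. \<omega> \<in> E (Suc i)}"
      using False by (auto simp: E_def)
    finally have "{\<omega> \<in> space M. \<forall>i\<in>{..<T}. \<omega> \<in> E (Suc i)} = (\<Inter>j\<in>{1..T}. E j)" ..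
    moreover have "prob (\<Inter>j\<in>{1..T}. E j) = (\<Prod>j\<in>{1..T}. prob (E j))"
      using indep_E False unfolding indep_events_def by auto
    ultimately show ?thesis unfolding prefix_eq by simp
  qed
  also have "\<dots> = (\<Prod>i<T. q (ws ! i))"
    using \<open>length ws = T\<close> by (simp add: prod.atLeast1_atMost_eq E_def law)
  also have "\<dots> = prod_list (map q ws)"
    using \<open>length ws = T\<close> by (simp add: prod.list_conv_set_nth atLeast0LessThan)
  finally show "prob {\<omega> \<in> space M. map (\<lambda>i. X i \<omega>) [1..<Suc T] = ws} = prod_list (map q ws)" .
qed

lemma (in prob_space) expectation_indep_prefix:
  fixes X :: "nat \<Rightarrow> 'a \<Rightarrow> 'b" and f :: "'b list \<Rightarrow> real"
  assumes indep: "indep_vars (\<lambda>_. count_space UNIV) X {1..T}"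
    and "finite A" and range: "\<And>i \<omega>. i \<in> {1..T} \<Longrightarrow> \<omega> \<in> space M \<Longrightarrow> X i \<omega> \<in> A"
    and law: "\<And>i x. i \<in> {1..T} \<Longrightarrow> x \<in> A \<Longrightarrow> prob {\<omega> \<in> space M. X i \<omega> = x} = q x"
  shows "(\<lambda>\<omega>. f (map (\<lambda>i. X i \<omega>) [1..<Suc T])) \<in> borel_measurable M"
    and "expectation (\<lambda>\<omega>. f (map (\<lambda>i. X i \<omega>) [1..<Suc T])) = list_expectation A q T f"
proof -
  let ?S = "{ws. set ws \<subseteq> A \<and> length ws = T}"
  have S: "finite ?S" "\<And>\<omega>. \<omega> \<in> space M \<Longrightarrow> map (\<lambda>i. X i \<omega>) [1..<Suc T] \<in> ?S"
    using \<open>finite A\<close> range by (auto intro: finite_lists_length_eq)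
  have events: "{\<omega> \<in> space M. map (\<lambda>i. X i \<omega>) [1..<Suc T] = ws} \<in> events"
    and prob: "prob {\<omega> \<in> space M. map (\<lambda>i. X i \<omega>) [1..<Suc T] = ws} = prod_list (map q ws)"
    if "ws \<in> ?S" for ws
  proof -
    have "\<And>i x. i \<in> {1..T} \<Longrightarrow> x \<in> set ws \<Longrightarrow> prob {\<omega> \<in> space M. X i \<omega> = x} = q x"
      using law that by blast
    from prob_indep_prefix[OF indep this] that
    show "{\<omega> \<in> space M. map (\<lambda>i. X i \<omega>) [1..<Suc T] = ws} \<in> events"
      and "prob {\<omega> \<in> space M. map (\<lambda>i. X i \<omega>) [1..<Suc T] = ws} = prod_list (map q ws)"
      by auto
  qed
  show "(\<lambda>\<omega>. f (map (\<lambda>i. X i \<omega>) [1..<Suc T])) \<in> borel_measurable M"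
    by (rule expectation_finite_range(1)[OF S events])
  have "expectation (\<lambda>\<omega>. f (map (\<lambda>i. X i \<omega>) [1..<Suc T]))
      = (\<Sum>ws\<in>?S. f ws * prob {\<omega> \<in> space M. map (\<lambda>i. X i \<omega>) [1..<Suc T] = ws})"
    by (rule expectation_finite_range(2)[OF S events])
  also have "\<dots> = list_expectation A q T f"
    unfolding list_expectation_def
  proof (intro sum.cong refl)
    fix ws assume "ws \<in> ?S"
    then show "f ws * prob {\<omega> \<in> space M. map (\<lambda>i. X i \<omega>) [1..<Suc T] = ws} = f ws * prod_list (map q ws)"
      by (simp only: prob)
  qed
  finally show "expectation (\<lambda>\<omega>. f (map (\<lambda>i. X i \<omega>) [1..<Suc T])) = list_expectation A q T f" .
qed

section \<open>Moments and correlation of the counting process\<close>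

locale sibuya_renewal_process = prob_space M for M :: "'a measure" +
  fixes Z :: "nat \<Rightarrow> 'a \<Rightarrow> nat" and \<alpha> :: real
  assumes \<alpha>_pos: "0 < \<alpha>" and \<alpha>_less_1: "\<alpha> < 1"
    and indep_Z: "indep_vars (\<lambda>_. count_space UNIV) Z {1..}"
    and prob_Z: "\<And>i k. i \<ge> 1 \<Longrightarrow> k \<ge> 1 \<Longrightarrow>
                   measure M {\<omega> \<in> space M. Z i \<omega> = k} = (-1) ^ (k - 1) * (\<alpha> gchoose k)"
begin

lemma Z_measurable: "i \<ge> 1 \<Longrightarrow> Z i \<in> M \<rightarrow>\<^sub>M count_space UNIV"
  using indep_Z unfolding indep_vars_def2 by auto

lemma Z_event: "i \<ge> 1 \<Longrightarrow> {\<omega> \<in> space M. P (Z i \<omega>)} \<in> events"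
  using measurable_sets[OF Z_measurable, of i "{x. P x}"] by (simp add: vimage_def Int_def conj_commute)

lemma prob_Z_le:
  assumes "i \<ge> 1"
  shows "prob {\<omega> \<in> space M. Z i \<omega> \<le> n}
       = prob {\<omega> \<in> space M. Z i \<omega> = 0} + (1 - shifted_gchoose (- \<alpha>) n)"
proof -
  have "{\<omega> \<in> space M. Z i \<omega> \<le> n} = (\<Union>k\<in>{..n}. {\<omega> \<in> space M. Z i \<omega> = k})" by auto
  then have "prob {\<omega> \<in> space M. Z i \<omega> \<le> n} = (\<Sum>k\<le>n. prob {\<omega> \<in> space M. Z i \<omega> = k})"
    using assms by (auto intro!: finite_measure_finite_Union Z_event simp: disjoint_family_on_def)
  also have "\<dots> = prob {\<omega> \<in> space M. Z i \<omega> = 0} + (\<Sum>k=1..n. sibuya \<alpha> k)"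
    using assms prob_Z by (simp add: atMost_atLeast0 sum.atLeast_Suc_atMost sibuya_def)
  finally show ?thesis using sibuya_sum[of \<alpha> n] by simp
qed

lemma prob_Z_eq_0:
  assumes "i \<ge> 1"
  shows "prob {\<omega> \<in> space M. Z i \<omega> = 0} = 0"
proof -
  have "prob {\<omega> \<in> space M. Z i \<omega> = 0} \<le> shifted_gchoose (- \<alpha>) n" for n
    using prob_Z_le[OF assms, of n] prob_le_1[of "{\<omega> \<in> space M. Z i \<omega> \<le> n}"] by linarith
  moreover have "shifted_gchoose (- \<alpha>) \<longlonglongrightarrow> 0"
    using \<alpha>_pos by (intro shifted_gchoose_tendsto_0) simp
  ultimately have "prob {\<omega> \<in> space M. Z i \<omega> = 0} \<le> 0"
    by (intro LIMSEQ_le_const) auto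
  then show ?thesis by (simp add: measure_le_0_iff)
qed

lemma AE_Z_pos: "AE \<omega> in M. \<forall>j\<ge>1. Z j \<omega> \<ge> 1"
proof -
  have "AE \<omega> in M. Z j \<omega> \<ge> 1" if "j \<ge> 1" for j
  proof (rule AE_I')
    show "{\<omega> \<in> space M. Z j \<omega> = 0} \<in> null_sets M"
      using prob_Z_eq_0[OF that] Z_event[OF that] by (simp add: null_sets_def emeasure_eq_measure)
  qed auto
  then show ?thesis by (simp add: AE_all_countable)
qed

lemma prob_min_Z_eq:
  assumes "i \<ge> 1" and "N \<ge> 1" and "k \<le> N"
  shows "prob {\<omega> \<in> space M. min (Z i \<omega>) N = k} = truncated_sibuya \<alpha> N k"
proof -
  consider "k = 0" | "1 \<le> k" "k < N" | "k = N" using \<open>k \<le> N\<close> by linarith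
  then show ?thesis
  proof cases
    case 1
    then have "{\<omega> \<in> space M. min (Z i \<omega>) N = k} = {\<omega> \<in> space M. Z i \<omega> = 0}"
      using \<open>N \<ge> 1\<close> by auto
    then show ?thesis using prob_Z_eq_0[OF \<open>i \<ge> 1\<close>] 1 by (simp add: truncated_sibuya_def)
  next
    case 2
    then have "{\<omega> \<in> space M. min (Z i \<omega>) N = k} = {\<omega> \<in> space M. Z i \<omega> = k}" by auto
    then show ?thesis using prob_Z[OF \<open>i \<ge> 1\<close>, of k] 2 by (simp add: truncated_sibuya_def sibuya_def)
  next
    case 3
    then have "{\<omega> \<in> space M. min (Z i \<omega>) N = k} = space M - {\<omega> \<in> space M. Z i \<omega> \<le> N - 1}"
      using \<open>N \<ge> 1\<close> by auto
    then have "prob {\<omega> \<in> space M. min (Z i \<omega>) N = k} = 1 - prob {\<omega> \<in> space M. Z i \<omega> \<le> N - 1}"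
      using prob_compl[OF Z_event[OF \<open>i \<ge> 1\<close>, of "\<lambda>z. z \<le> N - 1"]] by simp
    then show ?thesis
      using prob_Z_le[OF \<open>i \<ge> 1\<close>, of "N - 1"] prob_Z_eq_0[OF \<open>i \<ge> 1\<close>] 3 \<open>N \<ge> 1\<close>
      by (simp add: truncated_sibuya_def)
  qed
qed

lemma L_count_measurable [measurable]: "L_count Z t \<in> M \<rightarrow>\<^sub>M count_space UNIV"
proof -
  \<comment> \<open>Nothing is assumed about Z 0, so the sum is reindexed to mention only Z (Suc j).\<close>
  have [measurable]: "Z (Suc j) \<in> M \<rightarrow>\<^sub>M count_space UNIV" for j
    by (rule Z_measurable) simp
  have "L_count Z t = (\<lambda>\<omega>. Max {n. (\<Sum>j<n. Z (Suc j) \<omega>) \<le> t})"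
    by (simp add: fun_eq_iff L_count_def sigma_sum_def sum.atLeast1_atMost_eq)
  also have "\<dots> \<in> M \<rightarrow>\<^sub>M count_space UNIV" by measurable
  finally show ?thesis .
qed

lemma AE_L_count_eq_renewals:
  assumes "t \<le> T" and "t < N"
  shows "AE \<omega> in M. L_count Z t \<omega> = renewals t (map (\<lambda>i. min (Z i \<omega>) N) [1..<Suc T])"
  using AE_Z_pos
proof eventually_elim
  case (elim \<omega>)
  have "renewals t (map (\<lambda>i. min (Z i \<omega>) N) [1..<Suc T]) = renewals t (map (\<lambda>j. Z j \<omega>) [1..<Suc T])"
    using renewals_min[OF \<open>t < N\<close>, of "map (\<lambda>j. Z j \<omega>) [1..<Suc T]"]
    by (simp add: map_map comp_def del: upt_Suc)
  with elim show ?case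
    using Max_partial_sums_eq_renewals[of "\<lambda>j. Z j \<omega>", OF _ \<open>t \<le> T\<close>]
    by (simp add: L_count_def sigma_sum_def del: upt_Suc)
qed

lemma expectation_L_count_eq_sibuya_expectation:
  fixes F :: "nat \<Rightarrow> nat \<Rightarrow> real"
  assumes "t1 \<le> T" and "t2 \<le> T"
  shows "expectation (\<lambda>\<omega>. F (L_count Z t1 \<omega>) (L_count Z t2 \<omega>))
       = sibuya_expectation \<alpha> (Suc T) T (\<lambda>ws. F (renewals t1 ws) (renewals t2 ws))"
proof -
  let ?X = "\<lambda>i \<omega>. min (Z i \<omega>) (Suc T)"
  let ?G = "\<lambda>ws. F (renewals t1 ws) (renewals t2 ws)"
  have indep: "indep_vars (\<lambda>_. count_space UNIV) ?X {1..T}"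
    by (rule indep_vars_compose2[OF indep_vars_subset[OF indep_Z]]) auto
  have range: "\<And>i \<omega>. i \<in> {1..T} \<Longrightarrow> \<omega> \<in> space M \<Longrightarrow> ?X i \<omega> \<in> {0..Suc T}"
    by simp
  have law: "\<And>i x. i \<in> {1..T} \<Longrightarrow> x \<in> {0..Suc T} \<Longrightarrow>
      prob {\<omega> \<in> space M. ?X i \<omega> = x} = truncated_sibuya \<alpha> (Suc T) x"
    by (auto intro: prob_min_Z_eq)
  note prefix = expectation_indep_prefix[OF indep finite_atLeastAtMost range law, of ?G]
  have "AE \<omega> in M. L_count Z t1 \<omega> = renewals t1 (map (\<lambda>i. ?X i \<omega>) [1..<Suc T])"
    using assms by (intro AE_L_count_eq_renewals) auto
  moreover have "AE \<omega> in M. L_count Z t2 \<omega> = renewals t2 (map (\<lambda>i. ?X i \<omega>) [1..<Suc T])"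
    using assms by (intro AE_L_count_eq_renewals) auto
  ultimately have "AE \<omega> in M. F (L_count Z t1 \<omega>) (L_count Z t2 \<omega>) = ?G (map (\<lambda>i. ?X i \<omega>) [1..<Suc T])"
    by eventually_elim simp
  then have "expectation (\<lambda>\<omega>. F (L_count Z t1 \<omega>) (L_count Z t2 \<omega>))
      = expectation (\<lambda>\<omega>. ?G (map (\<lambda>i. ?X i \<omega>) [1..<Suc T]))"
    by (intro integral_cong_AE prefix(1)) measurable
  with prefix(2) show ?thesis by simp
qed

lemma expectation_L: "expectation (\<lambda>\<omega>. real (L_count Z t \<omega>)) = shifted_gchoose \<alpha> t - 1"
  using expectation_L_count_eq_sibuya_expectation[of t t t "\<lambda>x y. real x"]
    sibuya_expectation_renewals[of t "Suc t" t \<alpha>]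
  by simp

lemma expectation_L_mult_L_le:
  assumes "t1 \<le> t2"
  shows "expectation (\<lambda>\<omega>. real (L_count Z t1 \<omega>) * real (L_count Z t2 \<omega>))
       = (\<Sum>l=1..t1. shifted_gchoose (\<alpha> - 1) l *
            (shifted_gchoose \<alpha> (t1 - l) + shifted_gchoose \<alpha> (t2 - l) - 1))"
  using assms expectation_L_count_eq_sibuya_expectation[of t1 t2 t2 "\<lambda>x y. real x * real y"]
    sibuya_expectation_renewals_product[of t1 t2 "Suc t2" t2 \<alpha>]
  by simp

lemma expectation_L_mult_L:
  "expectation (\<lambda>\<omega>. real (L_count Z t1 \<omega>) * real (L_count Z t2 \<omega>))
     = (\<Sum>l=1..min t1 t2. shifted_gchoose (\<alpha> - 1) l *
          (shifted_gchoose \<alpha> (t1 - l) + shifted_gchoose \<alpha> (t2 - l) - 1))"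
proof (cases "t1 \<le> t2")
  case True
  then show ?thesis by (simp add: expectation_L_mult_L_le)
next
  case False
  have "expectation (\<lambda>\<omega>. real (L_count Z t1 \<omega>) * real (L_count Z t2 \<omega>))
      = expectation (\<lambda>\<omega>. real (L_count Z t2 \<omega>) * real (L_count Z t1 \<omega>))"
    by (simp add: mult.commute)
  with False show ?thesis by (simp add: expectation_L_mult_L_le add.commute)
qed

lemma expectation_L_squared:
  "expectation (\<lambda>\<omega>. (real (L_count Z t \<omega>))\<^sup>2)
     = 2 * shifted_gchoose (2 * \<alpha>) t - 3 * shifted_gchoose \<alpha> t + 1"
proof -
  have "expectation (\<lambda>\<omega>. (real (L_count Z t \<omega>))\<^sup>2)
      = (\<Sum>l=1..t. shifted_gchoose (\<alpha> - 1) l * (2 * shifted_gchoose \<alpha> (t - l) - 1))"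
    using expectation_L_mult_L_le[of t t] by (simp add: power2_eq_square)
  also have "\<dots> = 2 * (\<Sum>l=1..t. shifted_gchoose (\<alpha> - 1) l * shifted_gchoose \<alpha> (t - l))
                  - (\<Sum>l=1..t. shifted_gchoose (\<alpha> - 1) l)"
    by (simp add: right_diff_distrib sum_subtractf sum_distrib_left mult.left_commute)
  also have "\<dots> = 2 * shifted_gchoose (2 * \<alpha>) t - 3 * shifted_gchoose \<alpha> t + 1"
    using shifted_gchoose_convolution_from_1[of \<alpha> t] shifted_gchoose_sum_from_1[of \<alpha> t] by simp
  finally show ?thesis .
qed

lemma covariance_L:
  assumes "t1 \<le> t2"
  shows "covariance M (\<lambda>\<omega>. real (L_count Z t1 \<omega>)) (\<lambda>\<omega>. real (L_count Z t2 \<omega>))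
       = shifted_gchoose (2 * \<alpha>) t1 - shifted_gchoose \<alpha> t1
         + (\<Sum>l=1..t1. shifted_gchoose (\<alpha> - 1) l * (shifted_gchoose \<alpha> (t2 - l) - shifted_gchoose \<alpha> t2))"
proof -
  define c1 where "c1 = shifted_gchoose \<alpha> t1 - 1"
  define c2 where "c2 = shifted_gchoose \<alpha> t2 - 1"
  let ?E = "sibuya_expectation \<alpha> (Suc t2) t2"
  let ?u = "shifted_gchoose (\<alpha> - 1)"
  have "covariance M (\<lambda>\<omega>. real (L_count Z t1 \<omega>)) (\<lambda>\<omega>. real (L_count Z t2 \<omega>))
      = expectation (\<lambda>\<omega>. (real (L_count Z t1 \<omega>) - c1) * (real (L_count Z t2 \<omega>) - c2))"
    unfolding covariance_def expectation_L c1_def c2_def ..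
  also have "\<dots> = ?E (\<lambda>ws. (real (renewals t1 ws) - c1) * (real (renewals t2 ws) - c2))"
    using assms
    by (simp add: expectation_L_count_eq_sibuya_expectation[of t1 t2 t2 "\<lambda>x y. (real x - c1) * (real y - c2)"])
  also have "\<dots> = (\<Sum>l=1..t1. ?u l * (shifted_gchoose \<alpha> (t1 - l) + shifted_gchoose \<alpha> (t2 - l) - 1))
                  - c1 * c2"
  proof -
    have "sum (truncated_sibuya \<alpha> (Suc t2)) {0..Suc t2} = 1" by (rule sum_truncated_sibuya) simp
    moreover have "?E (\<lambda>ws. real (renewals t1 ws)) = c1" "?E (\<lambda>ws. real (renewals t2 ws)) = c2"
      unfolding c1_def c2_def using assms by (auto intro: sibuya_expectation_renewals)
    moreover have "?E (\<lambda>ws. real (renewals t1 ws) * real (renewals t2 ws))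
        = (\<Sum>l=1..t1. ?u l * (shifted_gchoose \<alpha> (t1 - l) + shifted_gchoose \<alpha> (t2 - l) - 1))"
      using assms by (intro sibuya_expectation_renewals_product) auto
    ultimately show ?thesis by (simp add: list_expectation_centered_product)
  qed
  also have "\<dots> = shifted_gchoose (2 * \<alpha>) t1 - shifted_gchoose \<alpha> t1
         + (\<Sum>l=1..t1. ?u l * (shifted_gchoose \<alpha> (t2 - l) - shifted_gchoose \<alpha> t2))"
  proof -
    define S where "S = (\<Sum>l=1..t1. ?u l)"
    define SA where "SA = (\<Sum>l=1..t1. ?u l * shifted_gchoose \<alpha> (t1 - l))"
    define SB where "SB = (\<Sum>l=1..t1. ?u l * shifted_gchoose \<alpha> (t2 - l))"
    have "(\<Sum>l=1..t1. ?u l * (shifted_gchoose \<alpha> (t1 - l) + shifted_gchoose \<alpha> (t2 - l) - 1)) = SA + SB - S"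
      by (simp add: S_def SA_def SB_def distrib_left right_diff_distrib sum.distrib sum_subtractf)
    moreover have "(\<Sum>l=1..t1. ?u l * (shifted_gchoose \<alpha> (t2 - l) - shifted_gchoose \<alpha> t2))
        = SB - S * shifted_gchoose \<alpha> t2"
      by (simp add: S_def SB_def right_diff_distrib sum_subtractf sum_distrib_right)
    moreover have "SA = shifted_gchoose (2 * \<alpha>) t1 - shifted_gchoose \<alpha> t1" "S = c1"
      unfolding SA_def S_def c1_def by (rule shifted_gchoose_convolution_from_1 shifted_gchoose_sum_from_1)+
    ultimately show ?thesis by (simp add: c1_def c2_def algebra_simps)
  qed
  finally show ?thesis .
qed

lemma variance_L:
  "variance (\<lambda>\<omega>. real (L_count Z t \<omega>))
     = 2 * shifted_gchoose (2 * \<alpha>) t - (shifted_gchoose \<alpha> t)\<^sup>2 - shifted_gchoose \<alpha> t"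
proof -
  have "variance (\<lambda>\<omega>. real (L_count Z t \<omega>))
      = covariance M (\<lambda>\<omega>. real (L_count Z t \<omega>)) (\<lambda>\<omega>. real (L_count Z t \<omega>))"
    by (simp add: covariance_def power2_eq_square)
  also have "\<dots> = 2 * shifted_gchoose (2 * \<alpha>) t - (shifted_gchoose \<alpha> t)\<^sup>2 - shifted_gchoose \<alpha> t"
  proof -
    define S where "S = (\<Sum>l=1..t. shifted_gchoose (\<alpha> - 1) l)"
    define SA where "SA = (\<Sum>l=1..t. shifted_gchoose (\<alpha> - 1) l * shifted_gchoose \<alpha> (t - l))"
    have "(\<Sum>l=1..t. shifted_gchoose (\<alpha> - 1) l * (shifted_gchoose \<alpha> (t - l) - shifted_gchoose \<alpha> t))
        = SA - S * shifted_gchoose \<alpha> t"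
      by (simp add: S_def SA_def right_diff_distrib sum_subtractf sum_distrib_right)
    moreover have "SA = shifted_gchoose (2 * \<alpha>) t - shifted_gchoose \<alpha> t" "S = shifted_gchoose \<alpha> t - 1"
      unfolding SA_def S_def by (rule shifted_gchoose_convolution_from_1 shifted_gchoose_sum_from_1)+
    ultimately show ?thesis by (simp add: covariance_L algebra_simps power2_eq_square)
  qed
  finally show ?thesis .
qed

lemma variance_L_pos:
  assumes "t \<ge> 1"
  shows "variance (\<lambda>\<omega>. real (L_count Z t \<omega>)) > 0"
proof -
  define c where "c = shifted_gchoose \<alpha> t - 1"
  have "c = (\<Sum>l=1..t. shifted_gchoose (\<alpha> - 1) l)"
    using shifted_gchoose_sum_from_1[of \<alpha> t] by (simp add: c_def)
  also have "\<dots> > 0"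
    using assms \<alpha>_pos by (intro sum_pos shifted_gchoose_pos) auto
  finally have "c > 0" .
  obtain s where t: "t = Suc s" using assms by (cases t) auto
  have "variance (\<lambda>\<omega>. real (L_count Z t \<omega>))
      = sibuya_expectation \<alpha> (Suc t) t (\<lambda>ws. (real (renewals t ws) - c)\<^sup>2)"
    using expectation_L_count_eq_sibuya_expectation[of t t t "\<lambda>x y. (real x - c)\<^sup>2"]
    by (simp add: expectation_L c_def)
  also have "\<dots> \<ge> shifted_gchoose (- \<alpha>) t * c\<^sup>2"
    using sibuya_expectation_centered_square_ge[OF \<alpha>_pos \<alpha>_less_1, where t = t and N = "Suc t" and T = s and c = c]
    by (simp add: t)
  moreover have "shifted_gchoose (- \<alpha>) t * c\<^sup>2 > 0"
    using \<alpha>_less_1 \<open>c > 0\<close> by (simp add: shifted_gchoose_pos)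
  ultimately show ?thesis by linarith
qed

lemma covariance_L_tendsto:
  "(\<lambda>t2. covariance M (\<lambda>\<omega>. real (L_count Z t1 \<omega>)) (\<lambda>\<omega>. real (L_count Z t2 \<omega>)))
     \<longlonglongrightarrow> shifted_gchoose (2 * \<alpha>) t1 - shifted_gchoose \<alpha> t1"
proof -
  have "(\<lambda>t2. shifted_gchoose (2 * \<alpha>) t1 - shifted_gchoose \<alpha> t1
          + (\<Sum>l=1..t1. shifted_gchoose (\<alpha> - 1) l * (shifted_gchoose \<alpha> (t2 - l) - shifted_gchoose \<alpha> t2)))
        \<longlonglongrightarrow> shifted_gchoose (2 * \<alpha>) t1 - shifted_gchoose \<alpha> t1
          + (\<Sum>l=1..t1. shifted_gchoose (\<alpha> - 1) l * 0)"
    by (intro tendsto_intros shifted_gchoose_shift_diff_tendsto_0 \<alpha>_less_1)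
  moreover have "\<forall>\<^sub>F t2 in sequentially.
      covariance M (\<lambda>\<omega>. real (L_count Z t1 \<omega>)) (\<lambda>\<omega>. real (L_count Z t2 \<omega>))
      = shifted_gchoose (2 * \<alpha>) t1 - shifted_gchoose \<alpha> t1
        + (\<Sum>l=1..t1. shifted_gchoose (\<alpha> - 1) l * (shifted_gchoose \<alpha> (t2 - l) - shifted_gchoose \<alpha> t2))"
    using eventually_ge_at_top[of t1] by eventually_elim (rule covariance_L)
  ultimately show ?thesis by (simp add: tendsto_cong)
qed

lemma variance_L_asymptotic:
  "(\<lambda>t. variance (\<lambda>\<omega>. real (L_count Z t \<omega>)) * real t powr (- (2 * \<alpha>)))
     \<longlonglongrightarrow> 2 * rGamma (2 * \<alpha> + 1) - (rGamma (\<alpha> + 1))\<^sup>2"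
  unfolding variance_L by (rule shifted_gchoose_variance_asymptotic[OF \<alpha>_pos])

lemma correlation_L_asymptotic:
  assumes "t1 \<ge> 1"
  shows "\<exists>C. ((\<lambda>t2. covariance M (\<lambda>\<omega>. real (L_count Z t1 \<omega>)) (\<lambda>\<omega>. real (L_count Z t2 \<omega>))
                 / sqrt (variance (\<lambda>\<omega>. real (L_count Z t1 \<omega>)) * variance (\<lambda>\<omega>. real (L_count Z t2 \<omega>)))
                 / (C * real t2 powr (- \<alpha>))) \<longlongrightarrow> 1) at_top"
proof -
  define cov where "cov t2 = covariance M (\<lambda>\<omega>. real (L_count Z t1 \<omega>)) (\<lambda>\<omega>. real (L_count Z t2 \<omega>))" for t2
  define var where "var t = variance (\<lambda>\<omega>. real (L_count Z t \<omega>))" for t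
  define K where "K = shifted_gchoose (2 * \<alpha>) t1 - shifted_gchoose \<alpha> t1"
  define D where "D = 2 * rGamma (2 * \<alpha> + 1) - (rGamma (\<alpha> + 1))\<^sup>2"
  define C where "C = K / sqrt (var t1 * D)"
  have "K = (\<Sum>l=1..t1. shifted_gchoose (\<alpha> - 1) l * shifted_gchoose \<alpha> (t1 - l))"
    unfolding K_def by (rule shifted_gchoose_convolution_from_1[symmetric])
  also have "\<dots> > 0"
    using assms \<alpha>_pos by (intro sum_pos mult_pos_pos shifted_gchoose_pos) auto
  finally have "K > 0" .
  have "D > 0"
    using Gamma_double_less[OF \<alpha>_pos \<alpha>_less_1] Gamma_real_pos[of "\<alpha> + 1"] Gamma_real_pos[of "2 * \<alpha> + 1"] \<alpha>_pos
    by (simp add: D_def rGamma_inverse_Gamma field_simps power2_eq_square)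
  have "var t1 > 0" unfolding var_def using assms by (rule variance_L_pos)
  have "C > 0" using \<open>K > 0\<close> \<open>D > 0\<close> \<open>var t1 > 0\<close> by (simp add: C_def)
  have lim: "(\<lambda>t2. cov t2 / sqrt (var t1 * (var t2 * real t2 powr (- (2 * \<alpha>)))) / C) \<longlonglongrightarrow> C / C"
    using \<open>K > 0\<close> \<open>D > 0\<close> \<open>var t1 > 0\<close> variance_L_asymptotic
    unfolding cov_def var_def C_def K_def D_def
    by (intro tendsto_intros covariance_L_tendsto) auto
  have ev: "\<forall>\<^sub>F t2 in sequentially.
      cov t2 / sqrt (var t1 * (var t2 * real t2 powr (- (2 * \<alpha>)))) / C
      = cov t2 / sqrt (var t1 * var t2) / (C * real t2 powr (- \<alpha>))"
    using eventually_gt_at_top[of 0]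
  proof eventually_elim
    case (elim t2)
    define p where "p = real t2 powr (- \<alpha>)"
    have "p > 0" using elim by (simp add: p_def)
    have "real t2 powr (- (2 * \<alpha>)) = p\<^sup>2"
      using elim by (simp add: p_def power2_eq_square flip: powr_add)
    then have "sqrt (var t1 * (var t2 * real t2 powr (- (2 * \<alpha>)))) = sqrt (var t1 * var t2) * p"
      using \<open>p > 0\<close> by (simp add: real_sqrt_mult)
    then show ?case by (simp add: p_def mult.commute)
  qed
  have "(\<lambda>t2. cov t2 / sqrt (var t1 * var t2) / (C * real t2 powr (- \<alpha>))) \<longlonglongrightarrow> 1"
    using Lim_transform_eventually[OF lim ev] \<open>C > 0\<close> by simp
  then show ?thesis unfolding cov_def var_def by blast
qed

end

theorem mainTheorem2:
  fixes M :: "'a measure" and Z :: "nat \<Rightarrow> 'a \<Rightarrow> nat" and \<alpha> :: real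
  assumes "prob_space M"
    and "0 < \<alpha>" and "\<alpha> < 1"
    and "prob_space.indep_vars M (\<lambda>_. count_space UNIV) Z {1..}"
    and "\<And>i k. i \<ge> 1 \<Longrightarrow> k \<ge> 1 \<Longrightarrow>
           measure M {\<omega> \<in> space M. Z i \<omega> = k} = (-1) ^ (k - 1) * (\<alpha> gchoose k)"
  shows "(\<forall>t::nat.
            prob_space.expectation M (\<lambda>\<omega>. real (L_count Z t \<omega>))
              = ((real t + \<alpha>) gchoose t) - 1)
       \<and> (\<forall>t::nat.
            prob_space.expectation M (\<lambda>\<omega>. (real (L_count Z t \<omega>))\<^sup>2)
              = 2 * ((real t + 2 * \<alpha>) gchoose t) - 3 * ((real t + \<alpha>) gchoose t) + 1)
       \<and> (\<forall>t1 t2::nat.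
            prob_space.expectation M (\<lambda>\<omega>. real (L_count Z t1 \<omega>) * real (L_count Z t2 \<omega>))
              = (\<Sum>l=1..min t1 t2. ((real l + \<alpha> - 1) gchoose l) *
                   (((real (t1 - l) + \<alpha>) gchoose (t1 - l))
                    + ((real (t2 - l) + \<alpha>) gchoose (t2 - l)) - 1)))
       \<and> (\<forall>t1::nat. t1 \<ge> 1 \<longrightarrow> (\<exists>C::real.
            ((\<lambda>t2::nat.
                (covariance M (\<lambda>\<omega>. real (L_count Z t1 \<omega>)) (\<lambda>\<omega>. real (L_count Z t2 \<omega>))
                  / sqrt (prob_space.variance M (\<lambda>\<omega>. real (L_count Z t1 \<omega>))
                          * prob_space.variance M (\<lambda>\<omega>. real (L_count Z t2 \<omega>))))
                / (C * real t2 powr (- \<alpha>)))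
              \<longlongrightarrow> 1) at_top))"
proof -
  interpret sibuya_renewal_process M Z \<alpha>
    by (intro sibuya_renewal_process.intro sibuya_renewal_process_axioms.intro assms)
  show ?thesis
    using expectation_L expectation_L_squared expectation_L_mult_L correlation_L_asymptotic
    by (simp add: shifted_gchoose_def add_diff_eq)
qed

end
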